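(* Let $n\ge4$ and let $G$ be an almost simple primitive permutation group with socle $G_0$ equal to $\mathrm{PSp}_n(q)$, $\mathrm{PSU}_n(q)$, or $\mathrm{P\Omega}^\epsilon_n(q)$ with $(n,\epsilon)\ne(4,-)$, acting on the set $X$ of all non-degenerate $2$-dimensional subspaces of the natural module $V$, where in the orthogonal case $X$ consists of the non-degenerate $2$-spaces of type $\mathrm{O}_2^+$. Then $\mathrm{diam}(X,G)\ge 3$.
   Context: The natural module carries the non-degenerate alternating, hermitian, or quadratic form preserved by $G_0$; a subspace $W$ is non-degenerate if $W\cap W^\perp=0$. A non-degenerate $2$-space of an orthogonal space is of type $\mathrm{O}_2^+$ if it contains a non-zero singular vector, and of type $\mathrm{O}_2^-$ otherwise. An (undirected) orbital graph of $(X,G)$ has as edge set a single $G$-orbit on unordered $2$-subsets of $X$; $\mathrm{diam}(X,G)$ is the maximum diameter of such graphs. *)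

theory Defs
  imports "HOL-Analysis.Determinants" "HOL-Algebra.SimpleGroups" "HOL-Algebra.Generated_Groups"
          "HOL-Algebra.Bij" "HOL-Library.Extended_Nat"
begin

definition field_aut :: "('a::field \<Rightarrow> 'a) \<Rightarrow> bool" where
  "field_aut s \<longleftrightarrow> bij s \<and> (\<forall>x y. s (x + y) = s x + s y \<and> s (x * y) = s x * s y)"

definition linear_map :: "('a::field^'n \<Rightarrow> 'a^'n) \<Rightarrow> bool" where
  "linear_map g \<longleftrightarrow> (\<forall>u v. g (u + v) = g u + g v) \<and> (\<forall>c v. g (c *s v) = c *s g v)"

definition semilinear_with :: "('a::field \<Rightarrow> 'a) \<Rightarrow> ('a^'n \<Rightarrow> 'a^'n) \<Rightarrow> bool" where
  "semilinear_with s g \<longleftrightarrow> field_aut s \<and> bij g \<and>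
     (\<forall>u v. g (u + v) = g u + g v) \<and> (\<forall>c v. g (c *s v) = s c *s g v)"

definition two_space :: "('a::field^'n) set \<Rightarrow> bool" where
  "two_space W \<longleftrightarrow> (\<exists>u v. (\<forall>a b. a *s u + b *s v = 0 \<longrightarrow> a = 0 \<and> b = 0)
                        \<and> W = {a *s u + b *s v | a b. True})"

definition perp :: "('a^'n \<Rightarrow> 'a^'n \<Rightarrow> 'a::field) \<Rightarrow> ('a^'n) set \<Rightarrow> ('a^'n) set" where
  "perp B W = {v. \<forall>w\<in>W. B w v = 0}"

definition nondeg_subspace :: "('a^'n \<Rightarrow> 'a^'n \<Rightarrow> 'a::field) \<Rightarrow> ('a^'n) set \<Rightarrow> bool" where
  "nondeg_subspace B W \<longleftrightarrow> W \<inter> perp B W = {0}"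

definition nondeg_form :: "('a^'n \<Rightarrow> 'a^'n \<Rightarrow> 'a::field) \<Rightarrow> bool" where
  "nondeg_form B \<longleftrightarrow> (\<forall>u. (\<forall>v. B u v = 0) \<longrightarrow> u = 0)"

definition left_linear :: "('a^'n \<Rightarrow> 'a^'n \<Rightarrow> 'a::field) \<Rightarrow> bool" where
  "left_linear B \<longleftrightarrow> (\<forall>u v w. B (u + v) w = B u w + B v w) \<and> (\<forall>c u w. B (c *s u) w = c * B u w)"

definition bilinear_form :: "('a^'n \<Rightarrow> 'a^'n \<Rightarrow> 'a::field) \<Rightarrow> bool" where
  "bilinear_form B \<longleftrightarrow> left_linear B \<and> left_linear (\<lambda>u v. B v u)"

definition symplectic_form :: "('a^'n \<Rightarrow> 'a^'n \<Rightarrow> 'a::field) \<Rightarrow> bool" where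
  "symplectic_form B \<longleftrightarrow> bilinear_form B \<and> (\<forall>v. B v v = 0) \<and> nondeg_form B"

definition hermitian_form :: "('a::field \<Rightarrow> 'a) \<Rightarrow> ('a^'n \<Rightarrow> 'a^'n \<Rightarrow> 'a) \<Rightarrow> bool" where
  "hermitian_form t B \<longleftrightarrow> field_aut t \<and> (\<forall>x. t (t x) = x) \<and> (\<exists>x. t x \<noteq> x) \<and>
     left_linear B \<and> (\<forall>u v. B v u = t (B u v)) \<and> nondeg_form B"

definition polar :: "('a^'n \<Rightarrow> 'a::field) \<Rightarrow> 'a^'n \<Rightarrow> 'a^'n \<Rightarrow> 'a" where
  "polar Q u v = Q (u + v) - Q u - Q v"

definition nondeg_quadratic_form :: "('a^'n \<Rightarrow> 'a::field) \<Rightarrow> bool" where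
  "nondeg_quadratic_form Q \<longleftrightarrow> (\<forall>c v. Q (c *s v) = c^2 * Q v) \<and> bilinear_form (polar Q)
     \<and> nondeg_form (polar Q)"

text \<open>Plus type in dimension 4: Witt index 2, i.e. a totally singular 2-space exists.\<close>
definition has_tot_singular_2space :: "('a^'n \<Rightarrow> 'a::field) \<Rightarrow> bool" where
  "has_tot_singular_2space Q \<longleftrightarrow> (\<exists>W. two_space W \<and> (\<forall>w\<in>W. Q w = 0))"

abbreviation GV :: "('a^'n \<Rightarrow> 'a^'n) monoid" where
  "GV \<equiv> BijGroup UNIV"

definition Sp_group :: "('a^'n \<Rightarrow> 'a^'n \<Rightarrow> 'a::field) \<Rightarrow> ('a^'n \<Rightarrow> 'a^'n) set" where
  "Sp_group B = {g. bij g \<and> linear_map g \<and> (\<forall>u v. B (g u) (g v) = B u v)}"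

definition SU_group :: "('a^'n \<Rightarrow> 'a^'n \<Rightarrow> 'a::field) \<Rightarrow> ('a^'n::finite \<Rightarrow> 'a^'n) set" where
  "SU_group B = {g. bij g \<and> linear_map g \<and> (\<forall>u v. B (g u) (g v) = B u v) \<and> det (matrix g) = 1}"

definition O_group :: "('a^'n \<Rightarrow> 'a::field) \<Rightarrow> ('a^'n \<Rightarrow> 'a^'n) set" where
  "O_group Q = {g. bij g \<and> linear_map g \<and> (\<forall>v. Q (g v) = Q v)}"

definition Omega_group :: "('a^'n \<Rightarrow> 'a::field) \<Rightarrow> ('a^'n \<Rightarrow> 'a^'n) set" where
  "Omega_group Q = derived GV (O_group Q)"

definition simil_B :: "('a^'n \<Rightarrow> 'a^'n \<Rightarrow> 'a::field) \<Rightarrow> ('a^'n \<Rightarrow> 'a^'n) set" where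
  "simil_B B = {g. \<exists>s l. semilinear_with s g \<and> l \<noteq> 0 \<and> (\<forall>u v. B (g u) (g v) = l * s (B u v))}"

definition simil_Q :: "('a^'n \<Rightarrow> 'a::field) \<Rightarrow> ('a^'n \<Rightarrow> 'a^'n) set" where
  "simil_Q Q = {g. \<exists>s l. semilinear_with s g \<and> l \<noteq> 0 \<and> (\<forall>v. Q (g v) = l * s (Q v))}"

text \<open>The three settings: X = set of points, Om = Sp / SU / Omega (quasisimple group on V),
  Gam = full group of semilinear similitudes of the form.\<close>
definition classical_setting ::
  "('a::field^'n::finite) set set \<Rightarrow> ('a^'n \<Rightarrow> 'a^'n) set \<Rightarrow> ('a^'n \<Rightarrow> 'a^'n) set \<Rightarrow> bool" where
  "classical_setting X Om Gam \<longleftrightarrow>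
     (\<exists>B. symplectic_form B \<and> X = {W. two_space W \<and> nondeg_subspace B W}
          \<and> Om = Sp_group B \<and> Gam = simil_B B)
   \<or> (\<exists>t B. hermitian_form t B \<and> X = {W. two_space W \<and> nondeg_subspace B W}
          \<and> Om = SU_group B \<and> Gam = simil_B B)
   \<or> (\<exists>Q. nondeg_quadratic_form Q \<and> (CARD('n) = 4 \<longrightarrow> has_tot_singular_2space Q)
          \<and> X = {W. two_space W \<and> nondeg_subspace (polar Q) W \<and> (\<exists>v\<in>W. v \<noteq> 0 \<and> Q v = 0)}
          \<and> Om = Omega_group Q \<and> Gam = simil_Q Q)"

definition induced_perm :: "'x set set \<Rightarrow> ('x \<Rightarrow> 'x) \<Rightarrow> ('x set \<Rightarrow> 'x set)" where
  "induced_perm X g = restrict (\<lambda>W. g ` W) X"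

definition perm_group :: "'p set \<Rightarrow> ('p \<Rightarrow> 'p) set \<Rightarrow> ('p \<Rightarrow> 'p) monoid" where
  "perm_group X G = (BijGroup X)\<lparr>carrier := G\<rparr>"

definition minimal_normal :: "('g, 'b) monoid_scheme \<Rightarrow> 'g set \<Rightarrow> bool" where
  "minimal_normal G N \<longleftrightarrow> N \<lhd> G \<and> N \<noteq> {\<one>\<^bsub>G\<^esub>} \<and>
     (\<forall>M. M \<lhd> G \<and> M \<subseteq> N \<longrightarrow> M = {\<one>\<^bsub>G\<^esub>} \<or> M = N)"

definition socle :: "('g, 'b) monoid_scheme \<Rightarrow> 'g set" where
  "socle G = generate G (\<Union>{N. minimal_normal G N})"

definition almost_simple_with_socle :: "('g, 'b) monoid_scheme \<Rightarrow> 'g set \<Rightarrow> bool" where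
  "almost_simple_with_socle G S \<longleftrightarrow> group G \<and> socle G = S \<and>
     simple_group (G\<lparr>carrier := S\<rparr>) \<and> \<not> comm_group (G\<lparr>carrier := S\<rparr>)"

definition primitive_on :: "'p set \<Rightarrow> ('p \<Rightarrow> 'p) set \<Rightarrow> bool" where
  "primitive_on X G \<longleftrightarrow> X \<noteq> {} \<and> (\<forall>x\<in>X. \<forall>y\<in>X. \<exists>g\<in>G. g x = y) \<and>
     (\<forall>B. B \<subseteq> X \<and> B \<noteq> {} \<and> (\<forall>g\<in>G. g ` B = B \<or> g ` B \<inter> B = {}) \<longrightarrow> card B = 1 \<or> B = X)"

text \<open>Edge sets of the undirected orbital graphs: G-orbits on 2-subsets of X.\<close>
definition uorbitals :: "'p set \<Rightarrow> ('p \<Rightarrow> 'p) set \<Rightarrow> 'p set set set" where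
  "uorbitals X G = {(\<lambda>g. g ` e) ` G | e. e \<subseteq> X \<and> card e = 2}"

definition walk :: "'p set set \<Rightarrow> nat \<Rightarrow> 'p \<Rightarrow> 'p \<Rightarrow> bool" where
  "walk E k u v \<longleftrightarrow> (\<exists>p. p 0 = u \<and> p k = v \<and> (\<forall>i<k. {p i, p (Suc i)} \<in> E))"

definition gdist :: "'p set set \<Rightarrow> 'p \<Rightarrow> 'p \<Rightarrow> enat" where
  "gdist E u v = (INF k \<in> {k. walk E k u v}. enat k)"

definition graph_diam :: "'p set \<Rightarrow> 'p set set \<Rightarrow> enat" where
  "graph_diam X E = (SUP u\<in>X. SUP v\<in>X. gdist E u v)"

text \<open>diam(X,G): maximum diameter of the orbital graphs (infinite if disconnected).\<close>
definition diam :: "'p set \<Rightarrow> ('p \<Rightarrow> 'p) set \<Rightarrow> enat" where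
  "diam X G = (SUP E\<in>uorbitals X G. graph_diam X E)"

end

theory Submission
  imports Defs
begin

text \<open>
  Write \<open>\<beta>\<close> for the form (the polar form in the orthogonal case). Since the Witt index is at
  least two there exist an isotropic \<open>e\<close>, an \<open>f\<close> with \<open>\<beta> f e = 1\<close> and a nonzero isotropic
  \<open>e' \<perp> e, f\<close>; over a finite field they are found by counting, using surjectivity of the
  norm in the hermitian case and sums of squares in the orthogonal case. The planes
  \<open>u = \<langle>e, f\<rangle>\<close> and \<open>v = \<langle>e, f + e'\<rangle>\<close> are distinct points of \<open>X\<close> through the isotropic point
  \<open>e\<close>, and as \<open>H\<close> acts by semilinear similitudes, every edge of the orbital graph of \<open>{u, v}\<close>
  joins two planes through a common isotropic point. A plane \<open>w \<in> X\<close> inside \<open>u\<^sup>\<perp>\<close>, through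
  \<open>e'\<close>, is then at distance at least three from \<open>u\<close>: \<open>u \<inter> w = 0\<close>, and a common neighbour
  \<open>z\<close> would be spanned by an isotropic \<open>a \<in> u\<close> and some \<open>b \<in> w\<close>, making \<open>a\<close> a radical vector
  of \<open>z\<close>.
\<close>

section \<open>Field automorphisms, norms and squares\<close>

context
  fixes s :: "'a::field \<Rightarrow> 'a"
  assumes aut: "field_aut s"
begin

lemma field_aut_add: "s (x + y) = s x + s y"
  and field_aut_mult: "s (x * y) = s x * s y"
  and field_aut_bij: "bij s"
  using aut unfolding field_aut_def by blast+

lemma field_aut_additive: "additive s"
  by unfold_locales (rule field_aut_add)

lemma field_aut_0: "s 0 = 0"
  and field_aut_minus: "s (- x) = - s x"
  and field_aut_diff: "s (x - y) = s x - s y"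
  using field_aut_additive by (simp_all add: additive.zero additive.minus additive.diff)

lemma field_aut_eq_0_iff: "s x = 0 \<longleftrightarrow> x = 0"
  using field_aut_bij field_aut_0 by (metis bij_pointE)

lemma field_aut_1: "s 1 = 1"
proof -
  have "s 1 * s 1 = s 1 * 1" using field_aut_mult[of 1 1] by simp
  then show ?thesis by (simp add: field_aut_eq_0_iff)
qed

lemma field_aut_inverse: "s (inverse x) = inverse (s x)"
proof (cases "x = 0")
  case False
  then have "s x * s (inverse x) = 1" by (simp add: field_aut_1 flip: field_aut_mult)
  then show ?thesis by (metis inverse_unique)
qed (simp add: field_aut_0)

lemma field_aut_divide: "s (x / y) = s x / s y"
  by (simp add: divide_inverse field_aut_mult field_aut_inverse)

end

lemma card_image_mult_le:
  assumes "finite A" and "\<And>a. a \<in> A \<Longrightarrow> m \<le> card {x \<in> A. f x = f a}"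
  shows "card (f ` A) * m \<le> card A"
proof -
  have "card (f ` A) * m \<le> (\<Sum>y\<in>f ` A. card {x \<in> A. f x = y})"
    using sum_bounded_below[of "f ` A" m "\<lambda>y. card {x \<in> A. f x = y}"] assms(2) by auto
  also have "\<dots> = card A"
    using sum.image_gen[OF assms(1), of "\<lambda>_. 1::nat" f] by simp
  finally show ?thesis .
qed

lemma card_le_card_image_mult:
  assumes "finite A" and "\<And>a. a \<in> A \<Longrightarrow> card {x \<in> A. f x = f a} \<le> m"
  shows "card A \<le> card (f ` A) * m"
proof -
  have "card A = (\<Sum>y\<in>f ` A. card {x \<in> A. f x = y})"
    using sum.image_gen[OF assms(1), of "\<lambda>_. 1::nat" f] by simp
  also have "\<dots> \<le> card (f ` A) * m"
    using sum_bounded_above[of "f ` A" "\<lambda>y. card {x \<in> A. f x = y}" m] assms(2) by auto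
  finally show ?thesis .
qed

context
  fixes t :: "'a::field \<Rightarrow> 'a"
  assumes aut: "field_aut t" and invol: "\<And>x. t (t x) = x"
begin

lemma hilbert_90:
  assumes "t \<theta> \<noteq> \<theta>" and "l * t l = 1"
  shows "\<exists>m. m \<noteq> 0 \<and> l = m / t m"
proof (cases "l = -1")
  case True
  define m where "m = \<theta> - t \<theta>"
  have "m \<noteq> 0" and "t m = - m"
    using assms(1) by (simp_all add: m_def field_aut_diff[OF aut] invol)
  then show ?thesis
    using True by (intro exI[of _ m]) simp
next
  case False
  have "l \<noteq> 0" using assms(2) by auto
  then have "t l = inverse l" using assms(2) by (metis inverse_unique)
  then have "t (1 + l) = (1 + l) / l"
    using \<open>l \<noteq> 0\<close> by (simp add: field_aut_add[OF aut] field_aut_1[OF aut] field_simps)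
  moreover have "1 + l \<noteq> 0" using False by (metis add.commute add_eq_0_iff)
  ultimately show ?thesis
    using \<open>l \<noteq> 0\<close> by (intro exI[of _ "1 + l"]) simp
qed

end

context
  fixes t :: "'a::{field,finite} \<Rightarrow> 'a"
  assumes aut: "field_aut t" and invol: "\<And>x. t (t x) = x"
begin

lemma card_quotients_mult_le:
  "card ((\<lambda>m. m / t m) ` (UNIV - {0})) * card {x. x \<noteq> 0 \<and> t x = x} \<le> card (UNIV - {0::'a})"
proof (rule card_image_mult_le)
  fix m :: 'a assume m: "m \<in> UNIV - {0}"
  have "inj_on (\<lambda>y. m * y) {x. x \<noteq> 0 \<and> t x = x}" using m by (auto intro: inj_onI)
  then have "card {x. x \<noteq> 0 \<and> t x = x} = card ((\<lambda>y. m * y) ` {x. x \<noteq> 0 \<and> t x = x})"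
    by (simp add: card_image)
  also have "\<dots> \<le> card {x \<in> UNIV - {0}. x / t x = m / t m}"
  proof (rule card_mono)
    have "(m * y) / t (m * y) = m / t m" if "y \<noteq> 0" "t y = y" for y
      using that by (simp add: field_aut_mult[OF aut])
    then show "(\<lambda>y. m * y) ` {x. x \<noteq> 0 \<and> t x = x} \<subseteq> {x \<in> UNIV - {0}. x / t x = m / t m}"
      using m by auto
  qed simp
  finally show "card {x. x \<noteq> 0 \<and> t x = x} \<le> card {x \<in> UNIV - {0}. x / t x = m / t m}" .
qed simp

text \<open>By Hilbert 90 every fibre of the norm map is a multiplicative translate of a subset of
  the quotients \<open>m / t m\<close>.\<close>
lemma card_units_le_norms_mult:
  assumes "t \<theta> \<noteq> \<theta>"
  shows "card (UNIV - {0::'a}) \<le> card ((\<lambda>l. l * t l) ` (UNIV - {0})) * card ((\<lambda>m. m / t m) ` (UNIV - {0}))"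
proof (rule card_le_card_image_mult)
  fix a :: 'a assume a: "a \<in> UNIV - {0}"
  let ?R = "(\<lambda>m. m / t m) ` (UNIV - {0})"
  have tp: "t (x * y) = t x * t y" "t (x / y) = t x / t y" "t x = 0 \<longleftrightarrow> x = 0" for x y
    by (simp_all add: field_aut_mult[OF aut] field_aut_divide[OF aut] field_aut_eq_0_iff[OF aut])
  have "{x \<in> UNIV - {0}. x * t x = a * t a} \<subseteq> (\<lambda>y. a * y) ` ?R"
  proof
    fix x assume x: "x \<in> {x \<in> UNIV - {0}. x * t x = a * t a}"
    have "(x / a) * t (x / a) = (x * t x) / (a * t a)" by (simp add: tp)
    then have "(x / a) * t (x / a) = 1" using a x by (simp add: tp)
    then obtain m where m: "m \<noteq> 0" "x / a = m / t m" using hilbert_90[OF aut invol assms] by blast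
    have "x = a * (m / t m)" using a m(2) by (simp add: field_simps)
    then show "x \<in> (\<lambda>y. a * y) ` ?R" using m(1) by blast
  qed
  then have "card {x \<in> UNIV - {0}. x * t x = a * t a} \<le> card ((\<lambda>y. a * y) ` ?R)"
    by (simp add: card_mono)
  also have "\<dots> \<le> card ?R" by (simp add: card_image_le)
  finally show "card {x \<in> UNIV - {0}. x * t x = a * t a} \<le> card ?R" .
qed simp

text \<open>Comparing the two counts gives \<open>|K\<^sup>*| \<le> |N(F\<^sup>*)|\<close>, where \<open>K\<close> is the fixed field of \<open>t\<close>
  and \<open>N l = l * t l\<close>; as \<open>N\<close> maps \<open>F\<^sup>*\<close> into \<open>K\<^sup>*\<close>, it is onto.\<close>
lemma norm_surj:
  assumes "t \<theta> \<noteq> \<theta>" and "t c = c" and "c \<noteq> 0"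
  shows "\<exists>l. l * t l = c"
proof -
  define F where "F = (UNIV :: 'a set) - {0}"
  define K where "K = {x. x \<noteq> 0 \<and> t x = x}"
  define N where "N l = l * t l" for l
  define R where "R m = m / t m" for m
  have "1 \<in> F" "finite F" unfolding F_def by simp_all
  then have "card F > 0" by (auto simp: card_gt_0_iff)
  have "card F * card K \<le> card (N ` F) * card (R ` F) * card K"
    using card_units_le_norms_mult[OF assms(1)] unfolding F_def N_def R_def by (rule mult_le_mono1)
  also have "\<dots> \<le> card F * card (N ` F)"
    using mult_le_mono2[OF card_quotients_mult_le, of "card (N ` F)"]
    unfolding F_def K_def R_def by (simp add: ac_simps)
  finally have "card K \<le> card (N ` F)"
    using \<open>card F > 0\<close> by simp
  moreover have "N ` F \<subseteq> K"
  proof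
    fix y assume "y \<in> N ` F"
    then obtain l where "l \<noteq> 0" "y = l * t l" unfolding F_def N_def by blast
    then show "y \<in> K"
      unfolding K_def by (simp add: field_aut_mult[OF aut] field_aut_eq_0_iff[OF aut] invol mult.commute)
  qed
  ultimately have "N ` F = K" by (simp add: card_seteq)
  moreover have "c \<in> K" using assms(2,3) unfolding K_def by simp
  ultimately obtain l where "c = N l" by blast
  then show ?thesis unfolding N_def by blast
qed

end

lemma card_squares: "CARD('a::{field,finite}) + 1 \<le> 2 * card (range (\<lambda>x::'a. x\<^sup>2))"
proof -
  define S where "S = range (\<lambda>x::'a. x\<^sup>2)"
  have "card (UNIV - {0::'a}) \<le> card ((\<lambda>x. x\<^sup>2) ` (UNIV - {0::'a})) * 2"
  proof (rule card_le_card_image_mult)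
    fix a :: 'a
    have "{x \<in> UNIV - {0}. x\<^sup>2 = a\<^sup>2} \<subseteq> {a, - a}"
      by (auto simp: power2_eq_iff)
    then have "card {x \<in> UNIV - {0}. x\<^sup>2 = a\<^sup>2} \<le> card {a, - a}"
      by (intro card_mono) simp_all
    also have "\<dots> \<le> 2" by (simp add: card_insert_if)
    finally show "card {x \<in> UNIV - {0}. x\<^sup>2 = a\<^sup>2} \<le> 2" .
  qed simp
  moreover have "(\<lambda>x. x\<^sup>2) ` (UNIV - {0::'a}) = S - {0}"
    unfolding S_def by auto
  moreover have "0 \<in> S" unfolding S_def by (metis rangeI zero_power2)
  ultimately have "CARD('a) - 1 \<le> (card S - 1) * 2"
    by (simp add: card_Diff_singleton)
  moreover have "card S \<ge> 1" "CARD('a) \<ge> 1"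
    using \<open>0 \<in> S\<close> by (auto simp: Suc_le_eq card_gt_0_iff)
  ultimately show ?thesis
    unfolding S_def by linarith
qed

lemma sum_of_squares_eq:
  fixes a b c :: "'a::{field,finite}"
  assumes "a \<noteq> 0" "b \<noteq> 0"
  shows "\<exists>x y. a * x\<^sup>2 + b * y\<^sup>2 = c"
proof -
  define S where "S = range (\<lambda>x::'a. x\<^sup>2)"
  define A where "A = (\<lambda>s. a * s) ` S"
  define B where "B = (\<lambda>s. c - b * s) ` S"
  have "inj_on (\<lambda>s. a * s) S" "inj_on (\<lambda>s. c - b * s) S"
    using assms by (simp_all add: inj_on_def)
  then have "card A = card S" "card B = card S"
    unfolding A_def B_def by (simp_all add: card_image)
  moreover have "card (A \<union> B) \<le> CARD('a)" by (simp add: card_mono)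
  moreover have "CARD('a) < card S + card S"
    using card_squares[where 'a='a] unfolding S_def by simp
  ultimately have "A \<inter> B \<noteq> {}"
    using card_Un_disjoint[of A B] by auto
  then obtain x y where "a * x\<^sup>2 = c - b * y\<^sup>2" unfolding A_def B_def S_def by blast
  then show ?thesis by (metis eq_diff_eq)
qed

lemma square_surj_char_2:
  fixes c :: "'a::{field,finite}"
  assumes "(2::'a) = 0"
  shows "\<exists>x. x\<^sup>2 = c"
proof -
  have "inj (\<lambda>x::'a. x\<^sup>2)"
  proof (rule injI)
    fix x y :: 'a assume "x\<^sup>2 = y\<^sup>2"
    moreover have "(x - y)\<^sup>2 = x\<^sup>2 - y\<^sup>2"
      using assms by (simp add: power2_diff)
    ultimately show "x = y" by simp
  qed
  then have "surj (\<lambda>x::'a. x\<^sup>2)" by (simp add: finite_UNIV_inj_surj)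
  then show ?thesis by (metis surjD)
qed

section \<open>Planes and semilinear similitudes\<close>

definition span2 :: "'a::field^'n \<Rightarrow> 'a^'n \<Rightarrow> ('a^'n) set" where
  "span2 x y = {a *s x + b *s y | a b. True}"

definition independent2 :: "'a::field^'n \<Rightarrow> 'a^'n \<Rightarrow> bool" where
  "independent2 x y \<longleftrightarrow> (\<forall>a b. a *s x + b *s y = 0 \<longrightarrow> a = 0 \<and> b = 0)"

lemma two_space_iff: "two_space W \<longleftrightarrow> (\<exists>x y. independent2 x y \<and> W = span2 x y)"
  unfolding two_space_def independent2_def span2_def by auto

lemma two_spaceE:
  assumes "two_space W"
  obtains x y where "independent2 x y" "W = span2 x y"
  using assms unfolding two_space_iff by blast

lemma span2_combI: "a *s x + b *s y \<in> span2 x y"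
  unfolding span2_def by blast

lemma span2E:
  assumes "z \<in> span2 x y"
  obtains a b where "z = a *s x + b *s y"
  using assms unfolding span2_def by blast

lemma span2_left: "x \<in> span2 x y"
  using span2_combI[of 1 x 0 y] by simp

lemma span2_right: "y \<in> span2 x y"
  using span2_combI[of 0 x 1 y] by simp

lemma span2_scale: "z \<in> span2 x y \<Longrightarrow> c *s z \<in> span2 x y"
  by (erule span2E) (metis span2_combI vector_smult_assoc vector_add_ldistrib)

lemma independent2_left_nonzero: "independent2 x y \<Longrightarrow> x \<noteq> 0"
  unfolding independent2_def by (metis add.right_neutral one_neq_zero vector_smult_lid vector_smult_lzero)

lemma two_space_nonzero: "two_space W \<Longrightarrow> \<exists>v\<in>W. v \<noteq> 0"
  by (metis independent2_left_nonzero span2_left two_spaceE)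

lemma span2_subset_span2:
  assumes "independent2 a b" "a \<in> span2 p q" "b \<in> span2 p q"
  shows "span2 p q \<subseteq> span2 a b"
proof -
  obtain a1 a2 where a: "a = a1 *s p + a2 *s q" using assms(2) by (rule span2E)
  obtain b1 b2 where b: "b = b1 *s p + b2 *s q" using assms(3) by (rule span2E)
  define D where "D = a1 * b2 - a2 * b1"
  have Dp: "D *s p = b2 *s a + (- a2) *s b" and Dq: "D *s q = (- b1) *s a + a1 *s b"
    unfolding a b D_def by (simp_all add: vec_eq_iff algebra_simps)
  have "D \<noteq> 0"
  proof
    assume "D = 0"
    then have "b2 = 0 \<and> a2 = 0" "b1 = 0 \<and> a1 = 0"
      using assms(1) Dp Dq unfolding independent2_def by (metis neg_equal_0_iff_equal vector_smult_lzero)+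
    then have "a = 0" unfolding a by simp
    then show False using independent2_left_nonzero[OF assms(1)] by simp
  qed
  show ?thesis
  proof
    fix z assume "z \<in> span2 p q"
    then obtain c d where z: "z = c *s p + d *s q" by (rule span2E)
    have "z = ((c * b2 - d * b1) / D) *s a + ((d * a1 - c * a2) / D) *s b"
      using \<open>D \<noteq> 0\<close> Dp Dq unfolding z
      by (simp add: vec_eq_iff field_simps) (simp add: a b D_def algebra_simps)
    then show "z \<in> span2 a b" by (metis span2_combI)
  qed
qed

context
  fixes s :: "'a::field \<Rightarrow> 'a" and h :: "'a^'n \<Rightarrow> 'a^'n"
  assumes semi: "semilinear_with s h"
begin

lemma semilinear_field_aut: "field_aut s"
  using semi unfolding semilinear_with_def by blast

lemma semilinear_add: "h (x + y) = h x + h y"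
  using semi unfolding semilinear_with_def by simp

lemma semilinear_comb: "h (a *s x + b *s y) = s a *s h x + s b *s h y"
  using semi unfolding semilinear_with_def by simp

lemma semilinear_inj: "inj h"
  using semi unfolding semilinear_with_def bij_def by blast

lemma semilinear_0: "h 0 = 0"
  using semilinear_comb[of 0 0 0 0] field_aut_0[OF semilinear_field_aut] by simp

lemma semilinear_eq_0_iff: "h x = 0 \<longleftrightarrow> x = 0"
  using semilinear_inj semilinear_0 by (metis injD)

lemma semilinear_image_span2: "h ` span2 x y = span2 (h x) (h y)"
proof
  show "h ` span2 x y \<subseteq> span2 (h x) (h y)"
    by (auto elim!: span2E simp: semilinear_comb span2_combI)
  show "span2 (h x) (h y) \<subseteq> h ` span2 x y"
  proof
    fix z assume "z \<in> span2 (h x) (h y)"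
    then obtain a b where z: "z = s a *s h x + s b *s h y"
      using field_aut_bij[OF semilinear_field_aut] by (elim span2E) (metis bij_pointE)
    then show "z \<in> h ` span2 x y"
      by (metis image_eqI semilinear_comb span2_combI)
  qed
qed

lemma semilinear_independent2: "independent2 x y \<Longrightarrow> independent2 (h x) (h y)"
  unfolding independent2_def
proof (intro allI impI)
  fix a b assume indep: "\<forall>a b. a *s x + b *s y = 0 \<longrightarrow> a = 0 \<and> b = 0"
    and "a *s h x + b *s h y = 0"
  moreover obtain a' b' where "a = s a'" "b = s b'"
    using field_aut_bij[OF semilinear_field_aut] by (metis bij_pointE)
  ultimately show "a = 0 \<and> b = 0"
    by (metis semilinear_comb semilinear_eq_0_iff field_aut_0[OF semilinear_field_aut])
qed

lemma semilinear_two_space: "two_space W \<Longrightarrow> two_space (h ` W)"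
  by (metis semilinear_image_span2 semilinear_independent2 two_space_iff)

end

definition similitude :: "('a^'n \<Rightarrow> 'a^'n \<Rightarrow> 'a::field) \<Rightarrow> ('a^'n \<Rightarrow> 'a^'n) \<Rightarrow> bool" where
  "similitude \<beta> h \<longleftrightarrow> (\<exists>s l. semilinear_with s h \<and> l \<noteq> 0 \<and> (\<forall>x y. \<beta> (h x) (h y) = l * s (\<beta> x y)))"

lemma simil_B_iff: "h \<in> simil_B B \<longleftrightarrow> similitude B h"
  unfolding simil_B_def similitude_def by simp

lemma simil_Q_similitude:
  assumes "h \<in> simil_Q Q"
  shows "similitude (polar Q) h"
proof -
  obtain s l where sl: "semilinear_with s h" "l \<noteq> 0" "\<forall>v. Q (h v) = l * s (Q v)"
    using assms unfolding simil_Q_def by blast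
  have "polar Q (h x) (h y) = l * s (polar Q x y)" for x y
  proof -
    have "polar Q (h x) (h y) = l * (s (Q (x + y)) - s (Q x) - s (Q y))"
      unfolding polar_def semilinear_add[OF sl(1), symmetric] using sl(3) by (simp add: algebra_simps)
    then show ?thesis
      unfolding polar_def by (simp add: field_aut_diff[OF semilinear_field_aut[OF sl(1)]])
  qed
  then show ?thesis using sl(1,2) unfolding similitude_def by blast
qed

lemma similitude_semilinear:
  assumes "similitude \<beta> h"
  obtains s where "semilinear_with s h"
  using assms unfolding similitude_def by blast

lemma similitude_eq_0_iff:
  assumes "similitude \<beta> h"
  shows "\<beta> (h x) (h y) = 0 \<longleftrightarrow> \<beta> x y = 0"
  using assms unfolding similitude_def
  by (auto simp: semilinear_field_aut field_aut_eq_0_iff)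

lemma similitude_nondeg_image:
  assumes "similitude \<beta> h" "nondeg_subspace \<beta> W"
  shows "nondeg_subspace \<beta> (h ` W)"
proof -
  obtain s where semi: "semilinear_with s h" using assms(1) by (rule similitude_semilinear)
  have "h ` W \<inter> perp \<beta> (h ` W) = h ` (W \<inter> perp \<beta> W)"
    using semilinear_inj[OF semi] similitude_eq_0_iff[OF assms(1)]
    unfolding perp_def by (auto simp: inj_image_mem_iff)
  then show ?thesis
    using assms(2) semilinear_0[OF semi] unfolding nondeg_subspace_def by simp
qed

section \<open>Reflexive forms\<close>

locale reflexive_form =
  fixes \<beta> :: "'a::field^'n \<Rightarrow> 'a^'n \<Rightarrow> 'a"
  assumes left_linear: "left_linear \<beta>"
    and orthogonal_sym: "\<beta> x y = 0 \<longleftrightarrow> \<beta> y x = 0"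
begin

lemma add_left: "\<beta> (x + y) z = \<beta> x z + \<beta> y z"
  and scale_left: "\<beta> (c *s x) z = c * \<beta> x z"
  using left_linear unfolding left_linear_def by blast+

lemma comb_left: "\<beta> (a *s x + b *s y) z = a * \<beta> x z + b * \<beta> y z"
  by (simp add: add_left scale_left)

lemma zero_left: "\<beta> 0 z = 0"
  using scale_left[of 0 z z] by simp

lemma zero_right: "\<beta> z 0 = 0"
  using orthogonal_sym zero_left by blast

lemma diff_left: "\<beta> (x - y) z = \<beta> x z - \<beta> y z"
  using comb_left[of 1 x "- 1" y z] by simp

lemma mem_perp_iff: "v \<in> perp \<beta> A \<longleftrightarrow> (\<forall>a\<in>A. \<beta> v a = 0)"
  unfolding perp_def using orthogonal_sym by blast

lemma nondeg_subspace_iff: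
  "nondeg_subspace \<beta> W \<longleftrightarrow> 0 \<in> W \<and> (\<forall>z\<in>W. z \<noteq> 0 \<longrightarrow> (\<exists>w\<in>W. \<beta> z w \<noteq> 0))"
proof -
  have "0 \<in> perp \<beta> W" by (simp add: perp_def zero_right)
  then have "nondeg_subspace \<beta> W \<longleftrightarrow> 0 \<in> W \<and> (\<forall>z\<in>W. z \<in> perp \<beta> W \<longrightarrow> z = 0)"
    unfolding nondeg_subspace_def by blast
  then show ?thesis unfolding mem_perp_iff by blast
qed

lemma nondeg_subspace_UNIV: "nondeg_form \<beta> \<Longrightarrow> nondeg_subspace \<beta> UNIV"
  unfolding nondeg_subspace_iff nondeg_form_def by blast

lemma nondeg_form_partner:
  assumes "nondeg_form \<beta>" "e \<noteq> 0"
  obtains f where "\<beta> f e = 1"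
proof -
  obtain v where "\<beta> e v \<noteq> 0" using assms unfolding nondeg_form_def by blast
  then have "\<beta> v e \<noteq> 0" using orthogonal_sym by blast
  then have "\<beta> ((1 / \<beta> v e) *s v) e = 1" by (simp add: scale_left)
  then show ?thesis by (rule that)
qed

lemma hyperbolic_pair_projection:
  assumes "\<beta> e e = 0" "\<beta> f e = 1"
  obtains v' where "\<beta> v' e = 0" "\<beta> v' f = 0" "\<And>z. z \<in> perp \<beta> {e, f} \<Longrightarrow> \<beta> v' z = \<beta> v z"
proof -
  have ef: "\<beta> e f \<noteq> 0" using assms(2) orthogonal_sym[of e f] by auto
  define c where "c = (\<beta> v f - \<beta> v e * \<beta> f f) / \<beta> e f"
  define v' where "v' = v - (c *s e + \<beta> v e *s f)"
  have v': "\<beta> v' z = \<beta> v z - c * \<beta> e z - \<beta> v e * \<beta> f z" for z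
    unfolding v'_def by (simp add: diff_left comb_left)
  show ?thesis
  proof (rule that)
    show "\<beta> v' e = 0" using v'[of e] assms by simp
    show "\<beta> v' f = 0" using v'[of f] ef unfolding c_def by (simp add: field_simps)
    show "\<beta> v' z = \<beta> v z" if "z \<in> perp \<beta> {e, f}" for z
      using that v'[of z] orthogonal_sym unfolding perp_def by auto
  qed
qed

lemma nondeg_perp_hyperbolic_pair:
  assumes "nondeg_form \<beta>" "\<beta> e e = 0" "\<beta> f e = 1"
  shows "nondeg_subspace \<beta> (perp \<beta> {e, f})"
  unfolding nondeg_subspace_iff
proof (intro conjI ballI impI)
  show "0 \<in> perp \<beta> {e, f}" by (simp add: mem_perp_iff zero_left)
  fix z assume z: "z \<in> perp \<beta> {e, f}" "z \<noteq> 0"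
  obtain v where "\<beta> z v \<noteq> 0" using assms(1) z(2) unfolding nondeg_form_def by blast
  then have "\<beta> v z \<noteq> 0" using orthogonal_sym by blast
  moreover obtain v' where "\<beta> v' e = 0" "\<beta> v' f = 0" "\<beta> v' z = \<beta> v z"
    using hyperbolic_pair_projection[OF assms(2,3), of v] z(1) by metis
  ultimately have "v' \<in> perp \<beta> {e, f}" "\<beta> z v' \<noteq> 0"
    using orthogonal_sym by (auto simp: mem_perp_iff)
  then show "\<exists>w\<in>perp \<beta> {e, f}. \<beta> z w \<noteq> 0" by blast
qed

lemma nondeg_perp_insert_anisotropic:
  assumes "nondeg_subspace \<beta> (perp \<beta> A)" "x \<in> perp \<beta> A" "\<beta> x x \<noteq> 0"
  shows "nondeg_subspace \<beta> (perp \<beta> (insert x A))"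
  unfolding nondeg_subspace_iff
proof (intro conjI ballI impI)
  show "0 \<in> perp \<beta> (insert x A)" by (simp add: mem_perp_iff zero_left)
  fix z assume z: "z \<in> perp \<beta> (insert x A)" "z \<noteq> 0"
  then have "z \<in> perp \<beta> A" by (simp add: mem_perp_iff)
  then obtain v where v: "v \<in> perp \<beta> A" "\<beta> z v \<noteq> 0"
    using assms(1) z(2) unfolding nondeg_subspace_iff by blast
  define v' where "v' = v - (\<beta> v x / \<beta> x x) *s x"
  have "\<beta> v' a = 0" if "a \<in> A" for a
    using that v(1) assms(2) unfolding v'_def by (simp add: mem_perp_iff diff_left scale_left)
  moreover have "\<beta> v' x = 0" unfolding v'_def using assms(3) by (simp add: diff_left scale_left)
  ultimately have "v' \<in> perp \<beta> (insert x A)" by (simp add: mem_perp_iff)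
  moreover have "\<beta> x z = 0" using z(1) orthogonal_sym by (simp add: mem_perp_iff)
  then have "\<beta> z v' = \<beta> z v \<or> \<beta> v' z = \<beta> v z" unfolding v'_def by (simp add: diff_left scale_left)
  then have "\<beta> z v' \<noteq> 0" using v(2) orthogonal_sym by metis
  ultimately show "\<exists>w\<in>perp \<beta> (insert x A). \<beta> z w \<noteq> 0" by blast
qed

lemma isotropic_pair_nondeg:
  assumes "\<beta> x x = 0" "\<beta> y x \<noteq> 0"
  shows "independent2 x y" "nondeg_subspace \<beta> (span2 x y)"
proof -
  have "\<beta> x y \<noteq> 0" using assms(2) orthogonal_sym by blast
  have coeffs_0: "a = 0 \<and> b = 0" if "\<beta> (a *s x + b *s y) x = 0" "\<beta> (a *s x + b *s y) y = 0" for a b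
    using that assms \<open>\<beta> x y \<noteq> 0\<close> by (simp add: comb_left scale_left)
  show "independent2 x y"
    unfolding independent2_def using coeffs_0 zero_left by metis
  show "nondeg_subspace \<beta> (span2 x y)"
    unfolding nondeg_subspace_iff
  proof (intro conjI ballI impI)
    show "0 \<in> span2 x y" using span2_combI[of 0 x 0 y] by simp
    fix z assume "z \<in> span2 x y" "z \<noteq> 0"
    moreover obtain a b where "z = a *s x + b *s y" using \<open>z \<in> span2 x y\<close> by (rule span2E)
    ultimately have "\<beta> z x \<noteq> 0 \<or> \<beta> z y \<noteq> 0" using coeffs_0[of a b] by auto
    then show "\<exists>w\<in>span2 x y. \<beta> z w \<noteq> 0"
      using span2_left span2_right by blast
  qed
qed

lemma nondeg_orthogonal_Int:
  assumes "nondeg_subspace \<beta> u" "w \<subseteq> perp \<beta> u" "x \<in> u" "x \<in> w"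
  shows "x = 0"
  using assms unfolding nondeg_subspace_def by blast

text \<open>An isotropic point \<open>a\<close> of \<open>u\<close> and a point \<open>b\<close> of \<open>w \<subseteq> u\<^sup>\<perp>\<close>
  span a plane in which \<open>a\<close> is orthogonal to everything.\<close>
lemma two_space_degenerate_if_meets_orthogonal:
  assumes "two_space u" "nondeg_subspace \<beta> u" "two_space w" "w \<subseteq> perp \<beta> u"
    and "two_space z" "a \<in> u" "a \<in> z" "a \<noteq> 0" "\<beta> a a = 0" "b \<in> w" "b \<in> z" "b \<noteq> 0"
  shows "\<not> nondeg_subspace \<beta> z"
proof
  assume nondeg_z: "nondeg_subspace \<beta> z"
  have "independent2 a b"
    unfolding independent2_def
  proof (intro allI impI)
    fix c d assume "c *s a + d *s b = 0"
    then have "c *s a = (- d) *s b" by (simp add: eq_neg_iff_add_eq_0)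
    moreover have "c *s a \<in> u" "(- d) *s b \<in> w"
      using assms(1,3,6,10) by (metis span2_scale two_spaceE)+
    ultimately have "c *s a = 0" using nondeg_orthogonal_Int[OF assms(2,4)] by metis
    then show "c = 0 \<and> d = 0"
      using \<open>c *s a + d *s b = 0\<close> assms(8,12) by simp
  qed
  moreover obtain p q where "z = span2 p q" using assms(5) by (rule two_spaceE)
  ultimately have "z \<subseteq> span2 a b" using assms(7,11) span2_subset_span2 by blast
  moreover have "\<beta> b a = 0" using assms(4,6,10) orthogonal_sym unfolding perp_def by blast
  ultimately have "\<beta> y a = 0" if "y \<in> z" for y
    using that assms(9) by (auto simp: comb_left elim!: span2E)
  then have "a \<in> perp \<beta> z" by (simp add: mem_perp_iff orthogonal_sym)
  then show False using nondeg_z assms(7,8) unfolding nondeg_subspace_def by blast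
qed

end

section \<open>Orbital graphs of nondegenerate planes\<close>

lemma walk_0_iff: "walk E 0 u v \<longleftrightarrow> u = v"
  unfolding walk_def by auto

lemma walk_1_iff: "walk E 1 u v \<longleftrightarrow> {u, v} \<in> E"
  unfolding walk_def
proof
  show "{u, v} \<in> E \<Longrightarrow> \<exists>p. p 0 = u \<and> p 1 = v \<and> (\<forall>i<1. {p i, p (Suc i)} \<in> E)"
    by (intro exI[of _ "\<lambda>i. if i = 0 then u else v"]) auto
qed auto

lemma walk_2_iff: "walk E 2 u v \<longleftrightarrow> (\<exists>z. {u, z} \<in> E \<and> {z, v} \<in> E)"
proof
  assume "walk E 2 u v"
  then obtain p where "p 0 = u" "p 2 = v" "\<forall>i<2. {p i, p (Suc i)} \<in> E"
    unfolding walk_def by blast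
  then show "\<exists>z. {u, z} \<in> E \<and> {z, v} \<in> E"
    by (metis lessI numeral_2_eq_2 zero_less_Suc)
next
  assume "\<exists>z. {u, z} \<in> E \<and> {z, v} \<in> E"
  then obtain z where "{u, z} \<in> E" "{z, v} \<in> E" by blast
  then show "walk E 2 u v"
    unfolding walk_def
    by (intro exI[of _ "\<lambda>i::nat. if i = 0 then u else if i = 1 then z else v"])
      (auto simp: less_2_cases_iff)
qed

lemma enat_le_gdist: "(\<And>k. walk E k u v \<Longrightarrow> n \<le> k) \<Longrightarrow> enat n \<le> gdist E u v"
  unfolding gdist_def by (rule INF_greatest) simp

lemma gdist_le_diam:
  assumes "E \<in> uorbitals X G" "u \<in> X" "v \<in> X"
  shows "gdist E u v \<le> diam X G"
proof -
  have "gdist E u v \<le> graph_diam X E"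
    unfolding graph_diam_def using assms(2,3) by (blast intro: SUP_upper2)
  also have "\<dots> \<le> diam X G"
    unfolding diam_def using assms(1) by (rule SUP_upper)
  finally show ?thesis .
qed

lemma orbit_in_uorbitals:
  assumes "u \<in> X" "v \<in> X" "u \<noteq> v"
  shows "(\<lambda>g. g ` {u, v}) ` G \<in> uorbitals X G"
proof -
  have "{u, v} \<subseteq> X" "card {u, v} = 2" using assms by auto
  then show ?thesis unfolding uorbitals_def by blast
qed

lemma induced_perm_image_pair:
  "u \<in> X \<Longrightarrow> v \<in> X \<Longrightarrow> induced_perm X h ` {u, v} = {h ` u, h ` v}"
  unfolding induced_perm_def by simp

text \<open>The configuration provided by Witt index at least two: \<open>\<langle>e, e'\<rangle>\<close> is a totally
  isotropic plane.\<close>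
definition isotropic_triple :: "('a^'n \<Rightarrow> 'a^'n \<Rightarrow> 'a::field) \<Rightarrow> 'a^'n \<Rightarrow> 'a^'n \<Rightarrow> 'a^'n \<Rightarrow> bool" where
  "isotropic_triple \<beta> e f e' \<longleftrightarrow>
     \<beta> e e = 0 \<and> \<beta> f e = 1 \<and> e' \<noteq> 0 \<and> \<beta> e' e' = 0 \<and> \<beta> e' e = 0 \<and> \<beta> e' f = 0"

context reflexive_form
begin

lemma orbital_edge_common_isotropic:
  assumes H: "\<And>h. h \<in> H \<Longrightarrow> similitude \<beta> h" "\<And>h W. h \<in> H \<Longrightarrow> W \<in> X \<Longrightarrow> h ` W \<in> X"
    and uv: "u \<in> X" "v \<in> X"
    and x: "x \<in> u" "x \<in> v" "x \<noteq> 0" "\<beta> x x = 0"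
    and edge: "{a, b} \<in> (\<lambda>g. g ` {u, v}) ` induced_perm X ` H"
  shows "a \<in> X \<and> b \<in> X \<and> (\<exists>y. y \<in> a \<and> y \<in> b \<and> y \<noteq> 0 \<and> \<beta> y y = 0)"
proof -
  obtain h where "h \<in> H" "{a, b} = induced_perm X h ` {u, v}"
    using edge by blast
  then have h: "h \<in> H" "{a, b} = {h ` u, h ` v}"
    using induced_perm_image_pair uv by simp_all
  obtain s where semi: "semilinear_with s h" using H(1)[OF h(1)] by (rule similitude_semilinear)
  have "h x \<in> h ` u" "h x \<in> h ` v" "h x \<noteq> 0" "\<beta> (h x) (h x) = 0"
    using x semilinear_eq_0_iff[OF semi] similitude_eq_0_iff[OF H(1)[OF h(1)]] by auto
  moreover have "h ` u \<in> X" "h ` v \<in> X" using H(2) h(1) uv by auto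
  ultimately show ?thesis using h(2) by (auto simp: doubleton_eq_iff)
qed

theorem diam_ge_3:
  assumes X: "X \<subseteq> {W. two_space W \<and> nondeg_subspace \<beta> W}"
    and H: "\<And>h. h \<in> H \<Longrightarrow> similitude \<beta> h" "\<And>h W. h \<in> H \<Longrightarrow> W \<in> X \<Longrightarrow> h ` W \<in> X"
    and uvw: "u \<in> X" "v \<in> X" "w \<in> X" "u \<noteq> v" "w \<subseteq> perp \<beta> u"
    and x: "x \<in> u" "x \<in> v" "x \<noteq> 0" "\<beta> x x = 0"
  shows "3 \<le> diam X (induced_perm X ` H)"
proof -
  define E where "E = (\<lambda>g. g ` {u, v}) ` induced_perm X ` H"
  have edge: "a \<in> X \<and> b \<in> X \<and> (\<exists>y. y \<in> a \<and> y \<in> b \<and> y \<noteq> 0 \<and> \<beta> y y = 0)"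
    if "{a, b} \<in> E" for a b
    using orbital_edge_common_isotropic[OF H uvw(1,2) x that[unfolded E_def]] .
  have u: "two_space u" "nondeg_subspace \<beta> u" and w: "two_space w"
    using X uvw(1,3) by auto
  have disjoint: "y = 0" if "y \<in> u" "y \<in> w" for y
    using nondeg_orthogonal_Int[OF u(2) uvw(5)] that .
  have "3 \<le> k" if walk: "walk E k u w" for k
  proof (rule ccontr)
    assume "\<not> 3 \<le> k"
    then consider "k = 0" | "k = 1" | "k = 2" by linarith
    then show False
    proof cases
      case 1
      then show False using walk x(1,3) disjoint by (simp add: walk_0_iff)
    next
      case 2
      then show False using walk edge disjoint by (metis walk_1_iff)
    next
      case 3
      then obtain z where "{u, z} \<in> E" "{z, w} \<in> E" using walk by (auto simp: walk_2_iff)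
      with edge obtain a b where z: "z \<in> X" and a: "a \<in> u" "a \<in> z" "a \<noteq> 0" "\<beta> a a = 0"
        and b: "b \<in> z" "b \<in> w" "b \<noteq> 0" by meson
      have "two_space z" "nondeg_subspace \<beta> z" using X z by auto
      then show False
        using two_space_degenerate_if_meets_orthogonal[OF u w uvw(5) _ a(1,2,3,4) b(2,1,3)] by blast
    qed
  qed
  then have "enat 3 \<le> gdist E u w" by (rule enat_le_gdist)
  also have "\<dots> \<le> diam X (induced_perm X ` H)"
    using gdist_le_diam orbit_in_uorbitals uvw unfolding E_def by metis
  finally show ?thesis by (simp add: numeral_eq_enat)
qed

lemma isotropic_triple_planes:
  assumes nondeg: "nondeg_form \<beta>" and triple: "isotropic_triple \<beta> e f e'"
  obtains u v w where "two_space u" "nondeg_subspace \<beta> u" "two_space v" "nondeg_subspace \<beta> v"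
    "two_space w" "nondeg_subspace \<beta> w" "e \<in> u" "e \<in> v" "e' \<in> w" "u \<noteq> v" "w \<subseteq> perp \<beta> u"
proof -
  have ee: "\<beta> e e = 0" and fe: "\<beta> f e = 1" and e': "e' \<noteq> 0" "\<beta> e' e' = 0" "\<beta> e' e = 0" "\<beta> e' f = 0"
    using triple unfolding isotropic_triple_def by blast+
  obtain y where "\<beta> e' y \<noteq> 0" using nondeg e'(1) unfolding nondeg_form_def by blast
  then have "\<beta> y e' \<noteq> 0" using orthogonal_sym by blast
  obtain y' where y': "\<beta> y' e = 0" "\<beta> y' f = 0"
    and proj: "\<And>z. z \<in> perp \<beta> {e, f} \<Longrightarrow> \<beta> y' z = \<beta> y z"
    using hyperbolic_pair_projection[OF ee fe, where v = y] by blast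
  have "e' \<in> perp \<beta> {e, f}" using e'(3,4) by (simp add: mem_perp_iff)
  then have y'e': "\<beta> y' e' \<noteq> 0" using proj \<open>\<beta> y e' \<noteq> 0\<close> by simp
  define u where "u = span2 e f"
  define v where "v = span2 e (f + e')"
  define w where "w = span2 e' y'"
  have "\<beta> (f + e') e = 1" using fe e'(3) by (simp add: add_left)
  then have u: "independent2 e f" "nondeg_subspace \<beta> u" and v: "independent2 e (f + e')" "nondeg_subspace \<beta> v"
    and w: "independent2 e' y'" "nondeg_subspace \<beta> w"
    using isotropic_pair_nondeg[OF ee] isotropic_pair_nondeg[OF e'(2) y'e'] fe
    unfolding u_def v_def w_def by simp_all
  have "\<beta> e e' = 0" "\<beta> f e' = 0" "\<beta> e y' = 0" "\<beta> f y' = 0"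
    using e'(3,4) y' orthogonal_sym by blast+
  then have "\<beta> p e' = 0" "\<beta> p y' = 0" if "p \<in> u" for p
    using that unfolding u_def by (auto simp: comb_left elim!: span2E)
  then have "\<beta> e' p = 0" "\<beta> y' p = 0" if "p \<in> u" for p
    using that orthogonal_sym by blast+
  then have "\<beta> q p = 0" if "q \<in> w" "p \<in> u" for p q
    using that unfolding w_def by (auto simp: comb_left elim!: span2E)
  then have "w \<subseteq> perp \<beta> u" by (auto simp: mem_perp_iff)
  moreover have "u \<noteq> v"
  proof
    assume "u = v"
    then obtain a b where "f + e' = a *s e + b *s f" using span2_right unfolding u_def v_def by (metis span2E)
    then have "e' = a *s e + (b - 1) *s f" by (simp add: vec_eq_iff algebra_simps)
    then have "e' \<in> u" unfolding u_def by (metis span2_combI)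
    then show False
      using nondeg_orthogonal_Int[OF u(2) \<open>w \<subseteq> perp \<beta> u\<close>] span2_left e'(1) unfolding w_def by blast
  qed
  moreover have "two_space u" "two_space v" "two_space w"
    unfolding u_def v_def w_def two_space_iff using u(1) v(1) w(1) by blast+
  ultimately show ?thesis
    using that u(2) v(2) w(2) span2_left unfolding u_def v_def w_def by blast
qed

theorem diam_ge_3_of_isotropic_triple:
  assumes nondeg: "nondeg_form \<beta>" and triple: "isotropic_triple \<beta> e f e'"
    and X: "X = {W. two_space W \<and> nondeg_subspace \<beta> W \<and> (\<exists>y\<in>W. y \<noteq> 0 \<and> S y)}"
    and H: "\<And>h. h \<in> H \<Longrightarrow> similitude \<beta> h \<and> (\<forall>y. S y \<longrightarrow> S (h y))"
    and S: "S e" "S e'"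
  shows "3 \<le> diam X (induced_perm X ` H)"
proof -
  obtain u v w where uvw: "two_space u" "nondeg_subspace \<beta> u" "two_space v" "nondeg_subspace \<beta> v"
    "two_space w" "nondeg_subspace \<beta> w" "e \<in> u" "e \<in> v" "e' \<in> w" "u \<noteq> v" "w \<subseteq> perp \<beta> u"
    using isotropic_triple_planes[OF nondeg triple] .
  have e: "e \<noteq> 0" "\<beta> e e = 0" and "e' \<noteq> 0"
    using triple zero_right unfolding isotropic_triple_def by auto
  have "h ` W \<in> X" if h: "h \<in> H" and W: "W \<in> X" for h W
  proof -
    have "similitude \<beta> h" using H h by blast
    then obtain s where semi: "semilinear_with s h" by (rule similitude_semilinear)
    obtain y where "y \<in> W" "y \<noteq> 0" "S y" using X W by blast
    then have "h y \<in> h ` W" "h y \<noteq> 0" "S (h y)" using H h semilinear_eq_0_iff[OF semi] by auto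
    then show ?thesis
      using X W semilinear_two_space[OF semi] similitude_nondeg_image \<open>similitude \<beta> h\<close> by blast
  qed
  moreover have "u \<in> X" "v \<in> X" "w \<in> X"
    using X uvw S e \<open>e' \<noteq> 0\<close> by blast+
  ultimately show ?thesis
    using diam_ge_3[of X H u v w e] X H uvw e by blast
qed

end

section \<open>Finite classical spaces\<close>

lemma card_field_ge_2: "2 \<le> CARD('a::{field,finite})"
proof -
  have "card {0::'a, 1} \<le> CARD('a)" by (rule card_mono) simp_all
  then show ?thesis by simp
qed

locale finite_reflexive_form = reflexive_form \<beta>
  for \<beta> :: "'a::{field,finite}^'n \<Rightarrow> 'a^'n \<Rightarrow> 'a"
begin

text \<open>The fibres of \<open>v \<mapsto> (\<beta> v \<phi>)\<^sub>\<phi>\<^sub>\<in>\<^sub>\<Phi>\<close> are cosets of \<open>\<Phi>\<^sup>\<perp>\<close>.\<close>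
lemma card_perp_list: "CARD('a) ^ CARD('n) \<le> CARD('a) ^ length \<Phi> * card (perp \<beta> (set \<Phi>))"
proof -
  define L where "L v = map (\<beta> v) \<Phi>" for v
  have "CARD('a^'n) \<le> card (range L) * card (perp \<beta> (set \<Phi>))"
  proof (rule card_le_card_image_mult)
    fix v :: "'a^'n"
    have "{x \<in> UNIV. L x = L v} \<subseteq> (\<lambda>k. v + k) ` perp \<beta> (set \<Phi>)"
    proof
      fix x assume "x \<in> {x \<in> UNIV. L x = L v}"
      then have "x - v \<in> perp \<beta> (set \<Phi>)"
        unfolding L_def by (simp add: mem_perp_iff diff_left)
      then show "x \<in> (\<lambda>k. v + k) ` perp \<beta> (set \<Phi>)" by (rule image_eqI[rotated]) simp
    qed
    then have "card {x \<in> UNIV. L x = L v} \<le> card ((\<lambda>k. v + k) ` perp \<beta> (set \<Phi>))"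
      by (simp add: card_mono)
    also have "\<dots> \<le> card (perp \<beta> (set \<Phi>))" by (rule card_image_le) simp
    finally show "card {x \<in> UNIV. L x = L v} \<le> card (perp \<beta> (set \<Phi>))" .
  qed simp
  moreover have "card (range L) \<le> CARD('a) ^ length \<Phi>"
  proof -
    have "range L \<subseteq> {xs. set xs \<subseteq> UNIV \<and> length xs = length \<Phi>}" unfolding L_def by auto
    then have "card (range L) \<le> card {xs. set xs \<subseteq> (UNIV :: 'a set) \<and> length xs = length \<Phi>}"
      by (intro card_mono finite_lists_length_eq) simp_all
    then show ?thesis using card_lists_length_eq[of "UNIV :: 'a set" "length \<Phi>"] by simp
  qed
  ultimately have "CARD('a^'n) \<le> CARD('a) ^ length \<Phi> * card (perp \<beta> (set \<Phi>))"
    by (rule order.trans[OF _ mult_le_mono1])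
  then show ?thesis by simp
qed

lemma card_perp_ge:
  assumes "length \<Phi> + m \<le> CARD('n)"
  shows "CARD('a) ^ m \<le> card (perp \<beta> (set \<Phi>))"
proof -
  have "CARD('a) ^ length \<Phi> * CARD('a) ^ m \<le> CARD('a) ^ CARD('n)"
    unfolding power_add[symmetric] using assms card_field_ge_2 by (intro power_increasing) auto
  then have "CARD('a) ^ length \<Phi> * CARD('a) ^ m \<le> CARD('a) ^ length \<Phi> * card (perp \<beta> (set \<Phi>))"
    using card_perp_list[of \<Phi>] by (rule order.trans)
  then show ?thesis by simp
qed

lemma perp_avoids:
  assumes "length \<Phi> + m \<le> CARD('n)" "card A < CARD('a) ^ m"
  shows "\<exists>v\<in>perp \<beta> (set \<Phi>). v \<notin> A"
proof (rule ccontr)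
  assume "\<not> ?thesis"
  then have "card (perp \<beta> (set \<Phi>)) \<le> card A" by (intro card_mono) auto
  then show False using card_perp_ge[OF assms(1)] assms(2) by simp
qed

lemma perp_nonzero: "length \<Phi> + 1 \<le> CARD('n) \<Longrightarrow> \<exists>v\<in>perp \<beta> (set \<Phi>). v \<noteq> 0"
  using perp_avoids[of \<Phi> 1 "{0}"] card_field_ge_2[where 'a='a] by auto

lemma perp_off_line:
  assumes "length \<Phi> + 2 \<le> CARD('n)"
  shows "\<exists>v\<in>perp \<beta> (set \<Phi>). v \<notin> range (\<lambda>c. c *s x)"
proof -
  have "card (range (\<lambda>c. c *s x)) \<le> CARD('a)" by (rule card_image_le) simp
  also have "\<dots> < CARD('a) * CARD('a)"
    using card_field_ge_2[where 'a='a] by (intro n_less_n_mult_m) simp_all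
  finally show ?thesis
    using perp_avoids[OF assms] by (simp add: power2_eq_square)
qed

end

locale symplectic_space =
  fixes \<beta> :: "'a::{field,finite}^'n \<Rightarrow> 'a^'n \<Rightarrow> 'a"
  assumes symplectic: "symplectic_form \<beta>"
begin

lemma alternating: "\<beta> v v = 0" and nondeg: "nondeg_form \<beta>"
  using symplectic unfolding symplectic_form_def by blast+

lemma skew: "\<beta> x y = - \<beta> y x"
proof -
  have "left_linear \<beta>" "left_linear (\<lambda>u v. \<beta> v u)"
    using symplectic unfolding symplectic_form_def bilinear_form_def by blast+
  then have "\<beta> (x + y) (x + y) = \<beta> x x + \<beta> x y + (\<beta> y x + \<beta> y y)"
    unfolding left_linear_def by (simp add: algebra_simps)
  then show ?thesis
    using alternating[of "x + y"] alternating[of x] alternating[of y] by (simp add: eq_neg_iff_add_eq_0)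
qed

sublocale finite_reflexive_form \<beta>
proof unfold_locales
  show "left_linear \<beta>" using symplectic unfolding symplectic_form_def bilinear_form_def by blast
  show "\<beta> x y = 0 \<longleftrightarrow> \<beta> y x = 0" for x y using skew[of x y] by simp
qed

lemma isotropic_triple_exists:
  assumes "3 \<le> CARD('n)"
  obtains e f e' where "isotropic_triple \<beta> e f e'"
proof -
  obtain e :: "'a^'n" where "e \<noteq> 0" using perp_nonzero[of "[]"] assms by auto
  then obtain f where f: "\<beta> f e = 1" using nondeg by (metis nondeg_form_partner)
  obtain e' where "e' \<in> perp \<beta> {e, f}" "e' \<noteq> 0" using perp_nonzero[of "[e, f]"] assms by auto
  then have "isotropic_triple \<beta> e f e'"
    using f alternating unfolding isotropic_triple_def by (simp add: mem_perp_iff)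
  then show ?thesis by (rule that)
qed

theorem diam_ge_3:
  assumes "3 \<le> CARD('n)" "X = {W. two_space W \<and> nondeg_subspace \<beta> W}" "H \<subseteq> simil_B \<beta>"
  shows "3 \<le> diam X (induced_perm X ` H)"
proof -
  obtain e f e' where triple: "isotropic_triple \<beta> e f e'" using isotropic_triple_exists assms(1) .
  have "X = {W. two_space W \<and> nondeg_subspace \<beta> W \<and> (\<exists>y\<in>W. y \<noteq> 0 \<and> True)}"
    using assms(2) two_space_nonzero by auto
  from diam_ge_3_of_isotropic_triple[OF nondeg triple this] show ?thesis
    using assms(3) unfolding subset_iff simil_B_iff by blast
qed

end

locale hermitian_space =
  fixes t :: "'a::{field,finite} \<Rightarrow> 'a" and \<beta> :: "'a^'n \<Rightarrow> 'a^'n \<Rightarrow> 'a"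
  assumes hermitian: "hermitian_form t \<beta>"
begin

lemma aut: "field_aut t" and invol: "t (t x) = x" and nontrivial: "\<exists>\<theta>. t \<theta> \<noteq> \<theta>"
  and conj_sym: "\<beta> v u = t (\<beta> u v)" and nondeg: "nondeg_form \<beta>"
  using hermitian unfolding hermitian_form_def by blast+

sublocale finite_reflexive_form \<beta>
proof unfold_locales
  show "left_linear \<beta>" using hermitian unfolding hermitian_form_def by blast
  show "\<beta> x y = 0 \<longleftrightarrow> \<beta> y x = 0" for x y
    using conj_sym[of y x] field_aut_eq_0_iff[OF aut] by simp
qed

lemma fixed_conj_self: "t (\<beta> x x) = \<beta> x x"
  using conj_sym[of x x] by simp

lemma exists_trace_nonzero: "\<exists>m. m + t m \<noteq> 0"
proof (rule ccontr)
  assume "\<not> ?thesis"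
  then have trace_0: "m + t m = 0" for m by blast
  have "(1::'a) + 1 = 0" using trace_0[of 1] by (simp add: field_aut_1[OF aut])
  then have "t m = m" for m
    using trace_0[of m] by (metis add_eq_0_iff distrib_left mult.right_neutral mult_zero_right)
  then show False using nontrivial by blast
qed

lemma exists_anisotropic:
  assumes "nondeg_subspace \<beta> (perp \<beta> A)" "y \<in> perp \<beta> A" "y \<noteq> 0"
  shows "\<exists>x\<in>perp \<beta> A. \<beta> x x \<noteq> 0"
proof (rule ccontr)
  assume "\<not> ?thesis"
  then have iso: "\<beta> x x = 0" if "x \<in> perp \<beta> A" for x using that by blast
  obtain z where z: "z \<in> perp \<beta> A" "\<beta> y z \<noteq> 0"
    using assms unfolding nondeg_subspace_iff by blast
  obtain m where m: "m + t m \<noteq> 0" using exists_trace_nonzero by blast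
  define c where "c = \<beta> z y"
  have "c \<noteq> 0" using z(2) orthogonal_sym unfolding c_def by blast
  define x where "x = y + (m / c) *s z"
  have expand: "\<beta> x w = \<beta> y w + (m / c) * \<beta> z w" for w
    unfolding x_def by (simp add: add_left scale_left)
  have "\<beta> x y = m" using expand[of y] iso[OF assms(2)] \<open>c \<noteq> 0\<close> by (simp add: c_def)
  moreover have "\<beta> x z = t c" using expand[of z] iso[OF z(1)] conj_sym[of y z] by (simp add: c_def)
  ultimately have "\<beta> y x = t m" "\<beta> z x = c" using conj_sym[of y x] conj_sym[of z x] invol by simp_all
  then have "\<beta> x x = t m + m" using expand[of x] \<open>c \<noteq> 0\<close> by simp
  moreover have "x \<in> perp \<beta> A"
    using assms(2) z(1) unfolding x_def by (simp add: mem_perp_iff add_left scale_left)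
  ultimately show False using iso m by (simp add: add.commute)
qed

text \<open>Two orthogonal anisotropic vectors \<open>x\<^sub>1, x\<^sub>2\<close> and a norm \<open>l * t l = - \<beta> x\<^sub>2 x\<^sub>2 / \<beta> x\<^sub>1 x\<^sub>1\<close>
  give the isotropic vector \<open>l x\<^sub>1 + x\<^sub>2\<close>.\<close>
lemma exists_isotropic:
  assumes "nondeg_subspace \<beta> (perp \<beta> (set \<Phi>))" "length \<Phi> + 2 \<le> CARD('n)"
  shows "\<exists>e\<in>perp \<beta> (set \<Phi>). e \<noteq> 0 \<and> \<beta> e e = 0"
proof -
  obtain x1 where x1: "x1 \<in> perp \<beta> (set \<Phi>)" "\<beta> x1 x1 \<noteq> 0"
    using exists_anisotropic[OF assms(1)] perp_nonzero[of \<Phi>] assms(2) by auto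
  have "nondeg_subspace \<beta> (perp \<beta> (set (x1 # \<Phi>)))"
    using nondeg_perp_insert_anisotropic[OF assms(1) x1] by simp
  then obtain x2 where x2: "x2 \<in> perp \<beta> (set (x1 # \<Phi>))" "\<beta> x2 x2 \<noteq> 0"
    using exists_anisotropic perp_nonzero[of "x1 # \<Phi>"] assms(2) by fastforce
  have "\<beta> x2 x1 = 0" "\<beta> x1 x2 = 0" using x2(1) orthogonal_sym by (simp_all add: mem_perp_iff)
  define c where "c = - (\<beta> x2 x2 / \<beta> x1 x1)"
  have "t c = c" "c \<noteq> 0"
    unfolding c_def using x1(2) x2(2)
    by (simp_all add: fixed_conj_self field_aut_minus[OF aut] field_aut_divide[OF aut])
  then obtain l where l: "l * t l = c"
    using norm_surj[OF aut invol] nontrivial by metis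
  define e where "e = l *s x1 + x2"
  have expand: "\<beta> e w = l * \<beta> x1 w + \<beta> x2 w" for w
    unfolding e_def by (simp add: add_left scale_left)
  have "\<beta> e x1 = l * \<beta> x1 x1" "\<beta> e x2 = \<beta> x2 x2"
    using expand[of x1] expand[of x2] \<open>\<beta> x2 x1 = 0\<close> \<open>\<beta> x1 x2 = 0\<close> by simp_all
  then have "\<beta> x1 e = t l * \<beta> x1 x1" "\<beta> x2 e = \<beta> x2 x2"
    using conj_sym[of x1 e] conj_sym[of x2 e] by (simp_all add: field_aut_mult[OF aut] fixed_conj_self)
  then have "\<beta> e e = c * \<beta> x1 x1 + \<beta> x2 x2"
    using expand[of e] unfolding l[symmetric] by (simp add: mult.assoc)
  then have "\<beta> e e = 0" using x1(2) unfolding c_def by simp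
  moreover have "e \<noteq> 0" using \<open>\<beta> e x2 = \<beta> x2 x2\<close> x2(2) zero_left by auto
  moreover have "e \<in> perp \<beta> (set \<Phi>)"
    using x1(1) x2(1) unfolding e_def by (simp add: mem_perp_iff add_left scale_left)
  ultimately show ?thesis by blast
qed

lemma isotropic_triple_exists:
  assumes "4 \<le> CARD('n)"
  obtains e f e' where "isotropic_triple \<beta> e f e'"
proof -
  obtain e :: "'a^'n" where e: "e \<noteq> 0" "\<beta> e e = 0"
    using exists_isotropic[of "[]"] nondeg_subspace_UNIV[OF nondeg] assms by (auto simp: perp_def)
  then obtain f where f: "\<beta> f e = 1" using nondeg by (metis nondeg_form_partner)
  obtain e' where "e' \<in> perp \<beta> {e, f}" "e' \<noteq> 0" "\<beta> e' e' = 0"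
    using exists_isotropic[of "[e, f]"] nondeg_perp_hyperbolic_pair[OF nondeg e(2) f] assms by auto
  then have "isotropic_triple \<beta> e f e'"
    using e f unfolding isotropic_triple_def by (simp add: mem_perp_iff)
  then show ?thesis by (rule that)
qed

theorem diam_ge_3:
  assumes "4 \<le> CARD('n)" "X = {W. two_space W \<and> nondeg_subspace \<beta> W}" "H \<subseteq> simil_B \<beta>"
  shows "3 \<le> diam X (induced_perm X ` H)"
proof -
  obtain e f e' where triple: "isotropic_triple \<beta> e f e'" using isotropic_triple_exists assms(1) .
  have "X = {W. two_space W \<and> nondeg_subspace \<beta> W \<and> (\<exists>y\<in>W. y \<noteq> 0 \<and> True)}"
    using assms(2) two_space_nonzero by auto
  from diam_ge_3_of_isotropic_triple[OF nondeg triple this] show ?thesis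
    using assms(3) unfolding subset_iff simil_B_iff by blast
qed

end

locale quadratic_space =
  fixes Q :: "'a::{field,finite}^'n \<Rightarrow> 'a"
  assumes nondeg_quadratic: "nondeg_quadratic_form Q"
begin

lemma quadratic_scale: "Q (c *s v) = c\<^sup>2 * Q v" and nondeg: "nondeg_form (polar Q)"
  using nondeg_quadratic unfolding nondeg_quadratic_form_def by blast+

lemma polar_sym: "polar Q x y = polar Q y x"
  unfolding polar_def by (simp add: add.commute)

lemma quadratic_add: "Q (x + y) = Q x + Q y + polar Q x y"
  unfolding polar_def by simp

sublocale finite_reflexive_form "polar Q"
proof unfold_locales
  show "left_linear (polar Q)"
    using nondeg_quadratic unfolding nondeg_quadratic_form_def bilinear_form_def by blast
  show "polar Q x y = 0 \<longleftrightarrow> polar Q y x = 0" for x y using polar_sym[of x y] by simp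
qed

lemma polar_self: "polar Q x x = 2 * Q x"
proof -
  have "x + x = 2 *s x" by (simp add: vec_eq_iff)
  then have "Q (x + x) = 4 * Q x" by (simp add: quadratic_scale)
  then show ?thesis unfolding polar_def by simp
qed

lemma scale_right: "polar Q x (c *s y) = c * polar Q x y"
  using scale_left[of c y x] polar_sym by simp

lemma comb_orthogonal:
  assumes "polar Q x y = 0"
  shows "Q (a *s x + b *s y) = a\<^sup>2 * Q x + b\<^sup>2 * Q y"
  using assms by (simp add: quadratic_add quadratic_scale scale_left scale_right)

text \<open>In odd characteristic \<open>- Q x\<^sub>3\<close> is a sum \<open>Q x\<^sub>1 l\<^sup>2 + Q x\<^sub>2 m\<^sup>2\<close>; in characteristic two
  every element is a square, so already \<open>x\<^sub>1, x\<^sub>2\<close> suffice.\<close>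
lemma singular_comb_of_orthogonal:
  assumes orth: "polar Q x1 x2 = 0" "polar Q x1 x3 = 0" "polar Q x2 x3 = 0"
    and aniso: "Q x1 \<noteq> 0" "Q x2 \<noteq> 0" "Q x3 \<noteq> 0" and "x2 \<notin> range (\<lambda>c. c *s x1)"
  shows "\<exists>a b c. a *s x1 + b *s x2 + c *s x3 \<noteq> 0 \<and> Q (a *s x1 + b *s x2 + c *s x3) = 0"
proof (cases "(2::'a) = 0")
  case True
  obtain l where l: "l\<^sup>2 = - (Q x2 / Q x1)" using square_surj_char_2[OF True] by blast
  have "Q (l *s x1 + x2) = l\<^sup>2 * Q x1 + Q x2"
    using comb_orthogonal[OF orth(1), of l 1] by simp
  also have "\<dots> = 0" using l aniso(1) by (simp add: field_simps)
  finally have "Q (l *s x1 + x2) = 0" .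
  moreover have "l *s x1 + x2 \<noteq> 0"
  proof
    assume "l *s x1 + x2 = 0"
    then have "x2 = (- l) *s x1" by (simp add: vec_eq_iff add_eq_0_iff)
    then show False using assms(7) by blast
  qed
  ultimately show ?thesis by (intro exI[of _ l] exI[of _ 1] exI[of _ 0]) simp
next
  case False
  obtain l m where lm: "Q x1 * l\<^sup>2 + Q x2 * m\<^sup>2 = - Q x3"
    using sum_of_squares_eq[OF aniso(1,2)] by blast
  define w where "w = l *s x1 + m *s x2"
  have "polar Q w x3 = 0" unfolding w_def using orth by (simp add: comb_left)
  then have "Q (w + x3) = (l\<^sup>2 * Q x1 + m\<^sup>2 * Q x2) + Q x3"
    using quadratic_add[of w x3] comb_orthogonal[OF orth(1), of l m] by (simp add: w_def)
  then have "Q (w + x3) = 0" using lm by (simp add: algebra_simps)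
  moreover have "polar Q (w + x3) x3 = 2 * Q x3"
    using \<open>polar Q w x3 = 0\<close> by (simp add: add_left polar_self)
  then have "w + x3 \<noteq> 0" using False aniso(3) zero_left by auto
  ultimately show ?thesis
    unfolding w_def by (intro exI[of _ l] exI[of _ m] exI[of _ 1]) simp
qed

lemma exists_singular:
  assumes "length \<Phi> + 3 \<le> CARD('n)"
  shows "\<exists>x\<in>perp (polar Q) (set \<Phi>). x \<noteq> 0 \<and> Q x = 0"
proof (rule ccontr)
  assume "\<not> ?thesis"
  then have aniso: "Q x \<noteq> 0" if "x \<in> perp (polar Q) (set \<Phi>)" "x \<noteq> 0" for x
    using that by blast
  obtain x1 where x1: "x1 \<in> perp (polar Q) (set \<Phi>)" "x1 \<noteq> 0"
    using perp_nonzero[of \<Phi>] assms by auto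
  obtain x2 where x2: "x2 \<in> perp (polar Q) (set (x1 # \<Phi>))" "x2 \<notin> range (\<lambda>c. c *s x1)"
    using perp_off_line[of "x1 # \<Phi>" x1] assms by auto
  obtain x3 where x3: "x3 \<in> perp (polar Q) (set (x2 # x1 # \<Phi>))" "x3 \<noteq> 0"
    using perp_nonzero[of "x2 # x1 # \<Phi>"] assms by auto
  have "x2 \<noteq> 0" using x2(2) by (metis rangeI vector_smult_lzero)
  have P: "x2 \<in> perp (polar Q) (set \<Phi>)" "x3 \<in> perp (polar Q) (set \<Phi>)"
    using x2(1) x3(1) by (simp_all add: mem_perp_iff)
  have "polar Q x1 x2 = 0" "polar Q x1 x3 = 0" "polar Q x2 x3 = 0"
    using x2(1) x3(1) polar_sym by (simp_all add: mem_perp_iff)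
  moreover have "Q x1 \<noteq> 0" "Q x2 \<noteq> 0" "Q x3 \<noteq> 0"
    using aniso x1 P x3(2) \<open>x2 \<noteq> 0\<close> by auto
  ultimately obtain a b c where v: "a *s x1 + b *s x2 + c *s x3 \<noteq> 0" "Q (a *s x1 + b *s x2 + c *s x3) = 0"
    using singular_comb_of_orthogonal x2(2) by blast
  moreover have "a *s x1 + b *s x2 + c *s x3 \<in> perp (polar Q) (set \<Phi>)"
    using x1(1) P by (simp add: mem_perp_iff add_left scale_left)
  ultimately show False using aniso by blast
qed

lemma tot_singular_2space_if_dim_ge_5:
  assumes "5 \<le> CARD('n)"
  shows "has_tot_singular_2space Q"
proof -
  obtain e where e: "e \<noteq> 0" "Q e = 0" using exists_singular[of "[]"] assms by auto
  then obtain f where f: "polar Q f e = 1" using nondeg by (metis nondeg_form_partner)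
  obtain e' where e': "e' \<in> perp (polar Q) {e, f}" "e' \<noteq> 0" "Q e' = 0"
    using exists_singular[of "[e, f]"] assms by auto
  have "polar Q e e' = 0" "polar Q e f = 1" "polar Q e' f = 0"
    using e' f polar_sym by (simp_all add: mem_perp_iff)
  then have "Q (a *s e + b *s e') = 0" for a b
    using comb_orthogonal e(2) e'(3) by simp
  moreover have "independent2 e e'"
    unfolding independent2_def
  proof (intro allI impI)
    fix a b assume "a *s e + b *s e' = 0"
    then have "polar Q (a *s e + b *s e') f = 0" by (simp add: zero_left)
    then have "a = 0" using \<open>polar Q e f = 1\<close> \<open>polar Q e' f = 0\<close> by (simp add: comb_left)
    then show "a = 0 \<and> b = 0" using \<open>a *s e + b *s e' = 0\<close> e'(2) by simp
  qed
  ultimately show ?thesis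
    unfolding has_tot_singular_2space_def two_space_iff span2_def by blast
qed

lemma singular_isotropic_triple_exists:
  assumes "has_tot_singular_2space Q"
  obtains e f e' where "isotropic_triple (polar Q) e f e'" "Q e = 0" "Q e' = 0"
proof -
  obtain a b where ab: "independent2 a b" "\<forall>w\<in>span2 a b. Q w = 0"
    using assms unfolding has_tot_singular_2space_def by (metis two_spaceE)
  then have Q0: "Q (x *s a + y *s b) = 0" for x y by (simp add: span2_combI)
  then have "Q a = 0" "Q b = 0" using Q0[of 1 0] Q0[of 0 1] by simp_all
  moreover have "polar Q b a = 0" using Q0[of 1 1] \<open>Q a = 0\<close> \<open>Q b = 0\<close> by (simp add: polar_def add.commute)
  moreover obtain f where f: "polar Q f a = 1"
    using nondeg independent2_left_nonzero[OF ab(1)] by (metis nondeg_form_partner)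
  define e' where "e' = (- polar Q b f) *s a + 1 *s b"
  have "e' \<noteq> 0" using ab(1) unfolding e'_def independent2_def by fastforce
  moreover have "Q e' = 0" unfolding e'_def by (rule Q0)
  moreover have "polar Q e' w = - polar Q b f * polar Q a w + polar Q b w" for w
    unfolding e'_def by (simp only: comb_left) simp
  then have "polar Q e' a = 0" "polar Q e' f = 0"
    using \<open>Q a = 0\<close> \<open>polar Q b a = 0\<close> f polar_sym[of a f] by (simp_all add: polar_self)
  ultimately have "isotropic_triple (polar Q) a f e'"
    using f unfolding isotropic_triple_def by (simp add: polar_self)
  then show ?thesis using that \<open>Q a = 0\<close> \<open>Q e' = 0\<close> by blast
qed

theorem diam_ge_3:
  assumes "has_tot_singular_2space Q"
    and X: "X = {W. two_space W \<and> nondeg_subspace (polar Q) W \<and> (\<exists>v\<in>W. v \<noteq> 0 \<and> Q v = 0)}"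
    and "H \<subseteq> simil_Q Q"
  shows "3 \<le> diam X (induced_perm X ` H)"
proof -
  obtain e f e' where "isotropic_triple (polar Q) e f e'" "Q e = 0" "Q e' = 0"
    using singular_isotropic_triple_exists assms(1) .
  moreover have "similitude (polar Q) h \<and> (\<forall>v. Q v = 0 \<longrightarrow> Q (h v) = 0)" if h: "h \<in> H" for h
  proof -
    obtain s l where semi: "semilinear_with s h" and "\<forall>v. Q (h v) = l * s (Q v)"
      using h assms(3) unfolding simil_Q_def by blast
    then have "Q v = 0 \<Longrightarrow> Q (h v) = 0" for v
      using field_aut_0[OF semilinear_field_aut[OF semi]] by simp
    then show ?thesis using h assms(3) simil_Q_similitude by blast
  qed
  ultimately show ?thesis
    using diam_ge_3_of_isotropic_triple[where S = "\<lambda>v. Q v = 0", OF nondeg _ X] by blast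
qed

end

theorem mainTheorem13:
  fixes X :: "('a::{field,finite}^'n::finite) set set"
    and Om Gam H :: "('a^'n \<Rightarrow> 'a^'n) set"
  assumes "CARD('n) \<ge> 4"
    and "classical_setting X Om Gam"
    and "subgroup H GV"
    and "Om \<subseteq> H" and "H \<subseteq> Gam"
    and "almost_simple_with_socle (perm_group X (induced_perm X ` H)) (induced_perm X ` Om)"
    and "primitive_on X (induced_perm X ` H)"
  shows "diam X (induced_perm X ` H) \<ge> 3"
  using assms(2) unfolding classical_setting_def
proof (elim disjE exE conjE)
  fix B assume "symplectic_form B" "X = {W. two_space W \<and> nondeg_subspace B W}" "Gam = simil_B B"
  then show ?thesis
    using symplectic_space.diam_ge_3[of B X H] assms(1,5) by (simp add: symplectic_space_def)
next
  fix t B assume "hermitian_form t B" "X = {W. two_space W \<and> nondeg_subspace B W}" "Gam = simil_B B"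
  then show ?thesis
    using hermitian_space.diam_ge_3[of t B X H] assms(1,5) by (simp add: hermitian_space_def)
next
  fix Q assume Q: "nondeg_quadratic_form Q" "CARD('n) = 4 \<longrightarrow> has_tot_singular_2space Q"
    "X = {W. two_space W \<and> nondeg_subspace (polar Q) W \<and> (\<exists>v\<in>W. v \<noteq> 0 \<and> Q v = 0)}" "Gam = simil_Q Q"
  interpret quadratic_space Q using Q(1) by unfold_locales
  have "has_tot_singular_2space Q"
    using Q(2) assms(1) tot_singular_2space_if_dim_ge_5 by fastforce
  then show ?thesis using diam_ge_3 Q(3,4) assms(5) by blast
qed

end
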